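(* Let $n,k\in\mathbb{N}$ with $1\le k\le n-1$. The map sending a weakly decreasing $\alpha=(a_1,\dots,a_n)\in PF_{n,k}$ (i.e. $a_1\ge a_2\ge\dots\ge a_n$) to the lattice path from $(0,n)$ to $(n,0)$ whose $i$-th east step goes from $(i-1,a_i-1)$ to $(i,a_i-1)$ for each $1\le i\le n$ (consecutive east steps joined by south steps) is a bijection from the set of weakly decreasing $k$-Naples parking functions of length $n$ onto the set of $k$-lattice paths of length $2n$. Equivalently, a weakly decreasing $\alpha\in[n]^n$ lies in $PF_{n,k}$ if and only if $a_i\le \min(n,\,n+k+1-i)$ for all $1\le i\le n$.
   Context: For $n\in\mathbb{N}$ let $[n]=\{1,\dots,n\}$ and $PP_n=[n]^n$. For an integer $k\ge 0$, the $k$-Naples parking rule: there are $n$ spots numbered $1,\dots,n$ west to east, initially empty; cars $c_1,\dots,c_n$ arrive in order, car $c_i$ preferring spot $a_i$. If spot $a_i$ is empty, $c_i$ parks there. Otherwise $c_i$ checks spots $a_i-1,\dots,a_i-k$ in this order (skipping those $<1$) and parks in the first empty one; if all are occupied, it drives east and parks in the first empty spot numbered greater than $a_i$, failing to park if none exists. $PF_{n,k}$ is the set of $\alpha\in PP_n$ for which all cars park. A $k$-lattice path of length $2n$ is a lattice path from $(0,n)$ to $(n,0)$ consisting of $n$ unit east steps $(1,0)$ and $n$ unit south steps $(0,-1)$, whose first step is a south step (so every east step lies at height at most $n-1$), and which never goes strictly above the line $y=n-x+k$; equivalently, if its $i$-th east step is at height $h_i$, then $n-1\ge h_1\ge h_2\ge\dots\ge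 h_n\ge 0$ and $h_i\le n-i+k$ for all $i$. *)

theory Defs
  imports Main
begin

text \<open>If a is occupied, the
  car checks a-1, ..., a-k (skipping spots < 1) in this order, i.e. it takes the
  largest empty spot in that window; otherwise it takes the first empty spot east of a.\<close>
definition naples_spot :: "nat \<Rightarrow> nat \<Rightarrow> nat set \<Rightarrow> nat \<Rightarrow> nat option" where
  "naples_spot n k S a =
     (if a \<notin> S then Some a
      else (let B = {j. 1 \<le> j \<and> a - k \<le> j \<and> j < a \<and> j \<notin> S} in
            if B \<noteq> {} then Some (Max B)
            else (let C = {j. a < j \<and> j \<le> n \<and> j \<notin> S} in
                  if C \<noteq> {} then Some (Min C) else None)))"

fun naples_parks :: "nat \<Rightarrow> nat \<Rightarrow> nat set \<Rightarrow> nat list \<Rightarrow> bool" where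
  "naples_parks n k S [] = True"
| "naples_parks n k S (a # as) =
     (case naples_spot n k S a of
        None \<Rightarrow> False
      | Some j \<Rightarrow> naples_parks n k (insert j S) as)"

definition PP :: "nat \<Rightarrow> nat list set" where
  "PP n = {\<alpha>. length \<alpha> = n \<and> set \<alpha> \<subseteq> {1..n}}"

definition PF :: "nat \<Rightarrow> nat \<Rightarrow> nat list set" where
  "PF n k = {\<alpha> \<in> PP n. naples_parks n k {} \<alpha>}"

datatype step = East | South

text \<open>A k-lattice path of length 2n: a list of steps starting at (0,n); after a prefix
  with e east steps and s south steps we are at (e, n - s).\<close>
definition k_lattice_path :: "nat \<Rightarrow> nat \<Rightarrow> step list \<Rightarrow> bool" where
  "k_lattice_path n k p \<longleftrightarrow>
     length p = 2 * n \<and> count_list p East = n \<and> count_list p South = n \<and>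
     p \<noteq> [] \<and> hd p = South \<and>
     (\<forall>j \<le> length p.
        int n - int (count_list (take j p) South)
          \<le> int n - int (count_list (take j p) East) + int k)"

fun path_from_heights :: "nat \<Rightarrow> nat list \<Rightarrow> step list" where
  "path_from_heights y [] = replicate y South"
| "path_from_heights y (h # hs) = replicate (y - h) South @ East # path_from_heights h hs"

definition pf_to_path :: "nat \<Rightarrow> nat list \<Rightarrow> step list" where
  "pf_to_path n \<alpha> = path_from_heights n (map (\<lambda>a. a - 1) \<alpha>)"

end

theory Submission
  imports Defs
begin

text \<open>For a weakly decreasing preference list a_0 \<ge> a_1 \<ge> ... the car with preference a_i,
  and every earlier car (since a_j \<ge> a_i), parks in {a_i - k..n}; so i + 1 cars fit into
  n + 1 - (a_i - k) spots, i.e. a_i \<le> n + k - i.  Conversely a car fails only if the whole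
  interval {max 1 (a_i - k)..n} is occupied, which the same bound excludes when only i cars have
  parked.  On the path side a_i \<le> n + k - i says that the i-th east step, at height a_i - 1,
  stays below the line y = n - x + k, and reading off the heights of the east steps inverts the
  map.\<close>

lemma naples_spot_SomeD:
  assumes "naples_spot n k S a = Some j" "1 \<le> a" "a \<le> n"
  shows "j \<notin> S" "1 \<le> j" "j \<le> n" "a - k \<le> j"
proof -
  define B where "B = {j. 1 \<le> j \<and> a - k \<le> j \<and> j < a \<and> j \<notin> S}"
  define C where "C = {j. a < j \<and> j \<le> n \<and> j \<notin> S}"
  have "finite B" unfolding B_def by (rule finite_subset[of _ "{..<a}"]) auto
  moreover have "finite C" unfolding C_def by (rule finite_subset[of _ "{..n}"]) auto
  moreover have "naples_spot n k S a =
      (if a \<notin> S then Some a else if B \<noteq> {} then Some (Max B)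
       else if C \<noteq> {} then Some (Min C) else None)"
    unfolding naples_spot_def B_def C_def Let_def by simp
  ultimately have "j = a \<and> a \<notin> S \<or> j \<in> B \<or> j \<in> C"
    using assms(1) by (auto split: if_splits)
  then show "j \<notin> S" "1 \<le> j" "j \<le> n" "a - k \<le> j"
    using assms(2,3) unfolding B_def C_def by auto
qed

lemma naples_spot_None_imp_subset:
  assumes "naples_spot n k S a = None"
  shows "{max 1 (a - k)..n} \<subseteq> S"
proof
  fix x assume x: "x \<in> {max 1 (a - k)..n}"
  have "a \<in> S"
    and "{j. 1 \<le> j \<and> a - k \<le> j \<and> j < a \<and> j \<notin> S} = {}"
    and "{j. a < j \<and> j \<le> n \<and> j \<notin> S} = {}"
    using assms by (auto simp: naples_spot_def Let_def split: if_splits)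
  with x show "x \<in> S"
    by (cases x a rule: linorder_cases) auto
qed

lemma naples_parks_if_bounded:
  assumes "finite S" "card S + length as \<le> n" "set as \<subseteq> {1..n}"
    and "\<forall>i < length as. as ! i \<le> n + k - (card S + i)"
  shows "naples_parks n k S as"
  using assms
proof (induction as arbitrary: S)
  case Nil
  then show ?case by simp
next
  case (Cons a as)
  have a: "1 \<le> a" "a \<le> n" "a \<le> n + k - card S"
    using Cons.prems(3) Cons.prems(4)[rule_format, of 0] by auto
  show ?case
  proof (cases "naples_spot n k S a")
    case None
    then have "card {max 1 (a - k)..n} \<le> card S"
      using Cons.prems(1) by (intro card_mono naples_spot_None_imp_subset)
    with a Cons.prems(2) show ?thesis by (simp add: max_def split: if_splits)
  next
    case (Some j)
    have j: "j \<notin> S" using naples_spot_SomeD[OF Some a(1,2)] by simp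
    then have card_j: "card (insert j S) = Suc (card S)" using Cons.prems(1) by simp
    have "naples_parks n k (insert j S) as"
    proof (rule Cons.IH)
      show "\<forall>i<length as. as ! i \<le> n + k - (card (insert j S) + i)"
        using Cons.prems(4) card_j by (auto dest: spec[of _ "Suc _"])
    qed (use Cons.prems card_j in auto)
    with Some show ?thesis by simp
  qed
qed

text \<open>The i-th car and the cars already parked in {a_i - k..n} all lie in that interval.\<close>
lemma naples_parks_decreasing_card_bound:
  assumes "naples_parks n k S as" "finite S" "set as \<subseteq> {1..n}" "sorted_wrt (\<ge>) as"
    and "i < length as"
  shows "card (S \<inter> {as ! i - k..n}) + i + 1 \<le> Suc n - (as ! i - k)"
  using assms
proof (induction as arbitrary: S i)
  case Nil
  then show ?case by simp
next
  case (Cons a as)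
  have a: "1 \<le> a" "a \<le> n" using Cons.prems(3) by auto
  obtain j where spot: "naples_spot n k S a = Some j"
    and parks: "naples_parks n k (insert j S) as"
    using Cons.prems(1) by (auto split: option.splits)
  note j = naples_spot_SomeD[OF spot a]
  show ?case
  proof (cases i)
    case 0
    have "card (insert j (S \<inter> {a - k..n})) \<le> card {a - k..n}"
      using j by (intro card_mono) auto
    with 0 j Cons.prems(2) show ?thesis by simp
  next
    case (Suc i')
    have i': "i' < length as" using Cons.prems(5) Suc by simp
    have "as ! i' \<le> a" using Cons.prems(4) i' nth_mem by fastforce
    with j have "insert j S \<inter> {as ! i' - k..n} = insert j (S \<inter> {as ! i' - k..n})"
      by auto
    moreover have "card (insert j S \<inter> {as ! i' - k..n}) + i' + 1 \<le> Suc n - (as ! i' - k)"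
      using Cons.IH[OF parks _ _ _ i'] Cons.prems(2-4) by simp
    ultimately show ?thesis using Suc j(1) Cons.prems(2) by simp
  qed
qed

lemma naples_parks_decreasing_iff:
  assumes "length as = n" "set as \<subseteq> {1..n}" "sorted_wrt (\<ge>) as"
  shows "naples_parks n k {} as \<longleftrightarrow> (\<forall>i < n. as ! i \<le> n + k - i)"
proof
  assume parks: "naples_parks n k {} as"
  show "\<forall>i < n. as ! i \<le> n + k - i"
  proof (intro allI impI)
    fix i assume i: "i < n"
    have "as ! i \<le> n" using assms(1,2) i nth_mem by fastforce
    with naples_parks_decreasing_card_bound[OF parks _ assms(2,3), of i] i assms(1)
    show "as ! i \<le> n + k - i" by simp
  qed
qed (use assms in \<open>intro naples_parks_if_bounded, auto\<close>)

text \<open>After a prefix with e east and s south steps a path started at (0, y) is at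
  (e, y - s); it is on or below y = y - x + d iff e \<le> s + d.\<close>
definition below_line :: "int \<Rightarrow> step list \<Rightarrow> bool" where
  "below_line d p \<longleftrightarrow>
     (\<forall>j \<le> length p. int (count_list (take j p) East) \<le> int (count_list (take j p) South) + d)"

lemma k_lattice_path_iff:
  "k_lattice_path n k p \<longleftrightarrow> length p = 2 * n \<and> count_list p East = n \<and>
     count_list p South = n \<and> p \<noteq> [] \<and> hd p = South \<and> below_line (int k) p"
  unfolding k_lattice_path_def below_line_def by auto

lemma below_line_nonneg: "below_line d p \<Longrightarrow> 0 \<le> d"
  unfolding below_line_def by (metis le0 take_0 count_list.simps(1) of_nat_0 add_0)

lemma below_line_Cons:
  "below_line d (x # p) \<longleftrightarrow> 0 \<le> d \<and> below_line (if x = East then d - 1 else d + 1) p"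
proof -
  have all_le_Suc: "(\<forall>j\<le>Suc m. P j) \<longleftrightarrow> P 0 \<and> (\<forall>j\<le>m. P (Suc j))" for m and P :: "nat \<Rightarrow> bool"
    by (simp only: less_Suc_eq_le[symmetric] All_less_Suc2)
  show ?thesis
    unfolding below_line_def by (cases x) (auto simp: all_le_Suc algebra_simps)
qed

lemma below_line_replicate_South:
  "below_line d (replicate m South @ q) \<longleftrightarrow> 0 \<le> d \<and> below_line (d + int m) q"
  by (induction m arbitrary: d) (auto simp: below_line_Cons algebra_simps dest: below_line_nonneg)

lemma below_line_path_from_heights:
  assumes "sorted_wrt (\<ge>) hs" "\<forall>h\<in>set hs. h \<le> y"
  shows "below_line d (path_from_heights y hs) \<longleftrightarrow>
     0 \<le> d \<and> (\<forall>i<length hs. int (hs ! i) + int i < d + int y)"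
  using assms
proof (induction hs arbitrary: y d)
  case Nil
  then show ?case
    using below_line_replicate_South[of d y "[]"] by (auto simp: below_line_def)
next
  case (Cons h hs)
  have "h \<le> y" using Cons.prems(2) by simp
  then have "below_line d (path_from_heights y (h # hs)) \<longleftrightarrow>
      0 \<le> d \<and> int h < d + int y \<and> below_line (d + int y - int h - 1) (path_from_heights h hs)"
    by (auto simp: below_line_replicate_South below_line_Cons of_nat_diff algebra_simps
        dest: below_line_nonneg)
  also have "\<dots> \<longleftrightarrow> 0 \<le> d \<and> int h < d + int y \<and>
      (\<forall>i<length hs. int (hs ! i) + int (Suc i) < d + int y)"
    using Cons.IH[of h] Cons.prems by auto
  also have "\<dots> \<longleftrightarrow> 0 \<le> d \<and> (\<forall>i<length (h # hs). int ((h # hs) ! i) + int i < d + int y)"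
    by (simp only: length_Cons All_less_Suc2 nth_Cons_0 nth_Cons_Suc) simp
  finally show ?case .
qed

lemma count_list_path_from_heights:
  assumes "sorted_wrt (\<ge>) hs" "\<forall>h\<in>set hs. h \<le> y"
  shows "count_list (path_from_heights y hs) South = y"
    and "count_list (path_from_heights y hs) East = length hs"
  using assms by (induction hs arbitrary: y) (auto simp: count_list_eq_length_filter)

lemma length_eq_count_South_East: "length p = count_list p South + count_list p East"
  by (induction p) (auto, metis step.exhaust)

fun east_heights :: "nat \<Rightarrow> step list \<Rightarrow> nat list" where
  "east_heights y [] = []"
| "east_heights y (South # p) = east_heights (y - 1) p"
| "east_heights y (East # p) = y # east_heights y p"

lemma east_heights_le: "\<forall>h\<in>set (east_heights y p). h \<le> y"
  by (induction y p rule: east_heights.induct) force+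

lemma sorted_east_heights: "sorted_wrt (\<ge>) (east_heights y p)"
  by (induction y p rule: east_heights.induct) (auto simp: east_heights_le)

lemma length_east_heights: "length (east_heights y p) = count_list p East"
  by (induction y p rule: east_heights.induct) auto

lemma east_heights_replicate_South: "east_heights y (replicate m South @ q) = east_heights (y - m) q"
  by (induction m arbitrary: y) simp_all

lemma east_heights_path_from_heights:
  assumes "sorted_wrt (\<ge>) hs" "\<forall>h\<in>set hs. h \<le> y"
  shows "east_heights y (path_from_heights y hs) = hs"
  using assms
  by (induction hs arbitrary: y)
    (simp_all add: east_heights_replicate_South east_heights_replicate_South[where q = "[]", simplified])

lemma path_from_heights_east_heights:
  assumes "count_list p South = y"
  shows "path_from_heights y (east_heights y p) = p"
  using assms
proof (induction y p rule: east_heights.induct)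
  case (2 y p)
  then obtain y' where y: "y = Suc y'" by (cases y) auto
  have "path_from_heights (Suc y') hs = South # path_from_heights y' hs"
    if "\<forall>h\<in>set hs. h \<le> y'" for hs
    using that by (cases hs) (auto simp: Suc_diff_le)
  with 2 y east_heights_le show ?case by simp
qed simp_all

definition bounded_decreasing :: "nat \<Rightarrow> nat \<Rightarrow> nat list set" where
  "bounded_decreasing n k =
     {\<alpha>. length \<alpha> = n \<and> set \<alpha> \<subseteq> {1..n} \<and> sorted_wrt (\<ge>) \<alpha> \<and> (\<forall>i < n. \<alpha> ! i \<le> n + k - i)}"

lemma decreasing_PF_eq_bounded_decreasing:
  "{\<alpha> \<in> PF n k. sorted_wrt (\<ge>) \<alpha>} = bounded_decreasing n k"
  using naples_parks_decreasing_iff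
  by (auto simp: PF_def PP_def bounded_decreasing_def)

lemma heights_of_bounded_decreasing:
  assumes "\<alpha> \<in> bounded_decreasing n k"
  shows "sorted_wrt (\<ge>) (map (\<lambda>a. a - 1) \<alpha>)" "\<forall>h\<in>set (map (\<lambda>a. a - 1) \<alpha>). h \<le> n"
  using assms by (auto simp: bounded_decreasing_def sorted_wrt_map subset_iff
      elim!: sorted_wrt_mono_rel[rotated])

lemma k_lattice_path_pf_to_path:
  assumes "\<alpha> \<in> bounded_decreasing n k" "0 < n"
  shows "k_lattice_path n k (pf_to_path n \<alpha>)"
proof -
  define hs where "hs = map (\<lambda>a. a - 1) \<alpha>"
  define p where "p = pf_to_path n \<alpha>"
  have \<alpha>: "length \<alpha> = n" "set \<alpha> \<subseteq> {1..n}" "\<forall>i<n. \<alpha> ! i \<le> n + k - i"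
    using assms(1) by (auto simp: bounded_decreasing_def)
  note sorted = heights_of_bounded_decreasing(1)[OF assms(1), folded hs_def]
  note le = heights_of_bounded_decreasing(2)[OF assms(1), folded hs_def]
  have p: "p = path_from_heights n hs" by (simp add: p_def pf_to_path_def hs_def)
  have counts: "count_list p South = n" "count_list p East = n"
    using count_list_path_from_heights[OF sorted le] \<alpha>(1) by (simp_all add: p hs_def)
  then have len: "length p = 2 * n" using length_eq_count_South_East[of p] by simp
  obtain h hs' where hs: "hs = h # hs'" "h < n"
    using \<alpha>(1,2) \<open>0 < n\<close> by (cases \<alpha>) (auto simp: hs_def)
  then have "hd p = South" by (cases "n - h") (simp_all add: p)
  moreover have "int (hs ! i) + int i < int k + int n" if "i < length hs" for i
  proof -
    have "\<alpha> ! i \<in> {1..n}" using \<alpha>(1,2) that nth_mem by (fastforce simp: hs_def)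
    with \<alpha>(3) that show ?thesis by (force simp: hs_def \<alpha>(1))
  qed
  then have "below_line (int k) p"
    unfolding p below_line_path_from_heights[OF sorted le] by simp
  ultimately show ?thesis
    using counts len \<open>0 < n\<close> by (auto simp: k_lattice_path_iff simp flip: p_def)
qed

lemma east_heights_k_lattice_path:
  assumes "k_lattice_path n k p"
  shows "map Suc (east_heights n p) \<in> bounded_decreasing n k"
proof -
  define hs where "hs = east_heights n p"
  have p: "count_list p East = n" "count_list p South = n" "p \<noteq> []" "hd p = South"
    "below_line (int k) p"
    using assms by (simp_all add: k_lattice_path_iff)
  then obtain p' where "p = South # p'" by (cases p) auto
  then have le: "\<forall>h\<in>set hs. h < n"
    using east_heights_le[of "n - 1" p'] p(2) by (auto simp: hs_def)
  have sorted: "sorted_wrt (\<ge>) hs" unfolding hs_def by (rule sorted_east_heights)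
  have len: "length hs = n" using length_east_heights p(1) by (simp add: hs_def)
  have "below_line (int k) (path_from_heights n hs)"
    using path_from_heights_east_heights[OF p(2)] p(5) by (simp add: hs_def)
  then have "\<forall>i<n. int (hs ! i) + int i < int k + int n"
    using le by (subst (asm) below_line_path_from_heights[OF sorted]) (auto simp: len)
  then have "\<forall>i<n. Suc (hs ! i) \<le> n + k - i" by auto
  with le sorted len show ?thesis
    by (auto simp: bounded_decreasing_def sorted_wrt_map hs_def [symmetric])
qed

lemma bij_betw_pf_to_path:
  assumes "0 < n"
  shows "bij_betw (pf_to_path n) (bounded_decreasing n k) {p. k_lattice_path n k p}"
proof (rule bij_betw_byWitness[where f' = "\<lambda>p. map Suc (east_heights n p)"])
  show "\<forall>\<alpha>\<in>bounded_decreasing n k. map Suc (east_heights n (pf_to_path n \<alpha>)) = \<alpha>"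
  proof
    fix \<alpha> assume \<alpha>: "\<alpha> \<in> bounded_decreasing n k"
    then have "east_heights n (pf_to_path n \<alpha>) = map (\<lambda>a. a - 1) \<alpha>"
      unfolding pf_to_path_def
      by (intro east_heights_path_from_heights heights_of_bounded_decreasing)
    moreover have "0 < a" if "a \<in> set \<alpha>" for a
      using \<alpha> that by (auto simp: bounded_decreasing_def)
    ultimately show "map Suc (east_heights n (pf_to_path n \<alpha>)) = \<alpha>"
      by (auto intro!: map_idI)
  qed
  show "\<forall>p\<in>{p. k_lattice_path n k p}. pf_to_path n (map Suc (east_heights n p)) = p"
    by (auto simp: k_lattice_path_iff pf_to_path_def comp_def path_from_heights_east_heights)
qed (use assms k_lattice_path_pf_to_path east_heights_k_lattice_path in auto)

lemma bounded_decreasing_reindex: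
  assumes "length \<alpha> = n" "set \<alpha> \<subseteq> {1..n}"
  shows "(\<forall>i \<in> {1..n}. \<alpha> ! (i - 1) \<le> min n (n + k + 1 - i)) \<longleftrightarrow> (\<forall>i < n. \<alpha> ! i \<le> n + k - i)"
proof -
  have "\<alpha> ! i \<le> n" if "i < n" for i using assms that nth_mem by fastforce
  then show ?thesis
    unfolding image_Suc_lessThan[symmetric] Ball_image_comp by auto
qed

theorem theorem1p3:
  fixes n k :: nat
  assumes "1 \<le> k" and "k \<le> n - 1"
  shows "bij_betw (pf_to_path n)
           {\<alpha> \<in> PF n k. sorted_wrt (\<ge>) \<alpha>}
           {p. k_lattice_path n k p}
         \<and> (\<forall>\<alpha> \<in> PP n. sorted_wrt (\<ge>) \<alpha> \<longrightarrow>
              (\<alpha> \<in> PF n k \<longleftrightarrow> (\<forall>i \<in> {1..n}. \<alpha> ! (i - 1) \<le> min n (n + k + 1 - i))))"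
proof
  have "0 < n" using assms by simp
  then show "bij_betw (pf_to_path n) {\<alpha> \<in> PF n k. sorted_wrt (\<ge>) \<alpha>} {p. k_lattice_path n k p}"
    unfolding decreasing_PF_eq_bounded_decreasing by (rule bij_betw_pf_to_path)
  show "\<forall>\<alpha> \<in> PP n. sorted_wrt (\<ge>) \<alpha> \<longrightarrow>
          (\<alpha> \<in> PF n k \<longleftrightarrow> (\<forall>i \<in> {1..n}. \<alpha> ! (i - 1) \<le> min n (n + k + 1 - i)))"
  proof (intro ballI impI)
    fix \<alpha> assume "\<alpha> \<in> PP n" "sorted_wrt (\<ge>) \<alpha>"
    then have "length \<alpha> = n" "set \<alpha> \<subseteq> {1..n}" "\<alpha> \<in> PF n k \<longleftrightarrow> \<alpha> \<in> bounded_decreasing n k"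
      using decreasing_PF_eq_bounded_decreasing[of n k] by (auto simp: PP_def)
    then show "\<alpha> \<in> PF n k \<longleftrightarrow> (\<forall>i \<in> {1..n}. \<alpha> ! (i - 1) \<le> min n (n + k + 1 - i))"
      using \<open>sorted_wrt (\<ge>) \<alpha>\<close> bounded_decreasing_reindex
      by (simp add: bounded_decreasing_def)
  qed
qed

end
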